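(* Let $A\in\mathbb{R}^{n\times n}$, let $W\in\mathbb{R}^{n\times n}$ be symmetric positive definite, let $C=\mathrm{diag}(C_{11},\dots,C_{nn})$ be diagonal positive definite and $V=\mathrm{diag}(\sigma_1^2,\dots,\sigma_n^2)$ with $\sigma_i>0$. Let $\Sigma\succ0$ be the solution of the discrete algebraic Riccati equation $\Sigma=A\Sigma A^T-A\Sigma C^T(C\Sigma C^T+V)^{-1}C\Sigma A^T+W$. Then $$\ln\det\Sigma\ge\ln\left[\frac{(\det A)^2}{\frac1n\left(\mathrm{tr}\,W^{-1}+\sum_{i=1}^n\frac{C_{ii}^2}{\sigma_i^2}\right)^n}+\det W\right].$$ *)

theory Defs
  imports "HOL-Analysis.Analysis"
begin

definition pos_def_mat :: "real^'n^'n \<Rightarrow> bool" where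
  "pos_def_mat M \<longleftrightarrow> transpose M = M \<and> (\<forall>x. x \<noteq> 0 \<longrightarrow> x \<bullet> (M *v x) > 0)"

definition diag_mat :: "real^'n^'n \<Rightarrow> bool" where
  "diag_mat M \<longleftrightarrow> (\<forall>i j. i \<noteq> j \<longrightarrow> M $ i $ j = 0)"

end

theory Submission
  imports Defs
begin

(* Write the Riccati equation as S = W + A P A^T. By the Woodbury identity, P is the inverse
   of the information matrix M = S^-1 + C^T V^-1 C, which is positive definite. Superadditivity
   of the determinant on positive semidefinite matrices gives det S >= det W + (det A)^2 / det M.
   The AM-GM inequality for the eigenvalues of M gives det M <= (tr M / n)^n, and
   tr M <= tr W^-1 + sum_i C_ii^2 / sigma_i^2 because S >= W implies S^-1 <= W^-1 in the
   Loewner order. *)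

definition pos_semidef_mat :: "real^'n^'n \<Rightarrow> bool" where
  "pos_semidef_mat M \<longleftrightarrow> transpose M = M \<and> (\<forall>x. 0 \<le> x \<bullet> (M *v x))"

definition diagm :: "('n \<Rightarrow> 'a::zero) \<Rightarrow> 'a^'n^'n" where
  "diagm d = (\<chi> i j. if i = j then d i else 0)"

lemma matrix_add_rdistrib: "(B + C) ** A = B ** A + C ** A"
  for A :: "'a::semiring_1^'p^'n" and B C :: "'a^'n^'m"
  by (vector matrix_matrix_mult_def sum.distrib[symmetric] distrib_right)

lemma matrix_diff_ldistrib: "A ** (B - C) = A ** B - A ** C"
  for A :: "'a::ring_1^'n^'m" and B C :: "'a^'p^'n"
  by (vector matrix_matrix_mult_def sum_subtractf[symmetric] right_diff_distrib)

lemma matrix_diff_rdistrib: "(B - C) ** A = B ** A - C ** A"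
  for A :: "'a::ring_1^'p^'n" and B C :: "'a^'n^'m"
  by (vector matrix_matrix_mult_def sum_subtractf[symmetric] left_diff_distrib)

lemma transpose_add: "transpose (A + B) = transpose A + transpose B"
  by (simp add: transpose_def vec_eq_iff)

lemma symmetric_matrix_inner_commute:
  fixes M :: "real^'n^'n"
  assumes "transpose M = M"
  shows "(M *v x) \<bullet> y = x \<bullet> (M *v y)"
  by (metis assms dot_lmul_matrix transpose_matrix_vector)

lemma quadratic_form_congruence:
  fixes A :: "real^'m^'n" and B :: "real^'m^'m"
  shows "x \<bullet> ((A ** B ** transpose A) *v x) = (transpose A *v x) \<bullet> (B *v (transpose A *v x))"
  by (metis dot_lmul_matrix matrix_vector_mul_assoc transpose_matrix_vector)

lemma diag_eq_inner_axis: "A $ i $ i = axis i 1 \<bullet> (A *v axis i 1)"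
  for A :: "real^'n^'n"
  by (simp add: inner_axis' matrix_vector_mult_basis column_def)

lemma diagm_mult: "diagm a ** diagm b = diagm (\<lambda>j. a j * b j)"
  for a b :: "'n::finite \<Rightarrow> 'a::semiring_1"
  by (simp add: vec_eq_iff matrix_matrix_mult_def diagm_def if_distrib[of "\<lambda>x. x * _"] cong: if_cong)

lemma transpose_diagm [simp]: "transpose (diagm d) = diagm d"
  by (simp add: vec_eq_iff transpose_def diagm_def)

lemma diagm_1: "diagm (\<lambda>_. 1) = mat 1"
  by (simp add: vec_eq_iff diagm_def mat_def)

lemma diagm_add: "diagm a + diagm b = diagm (\<lambda>j. a j + b j)"
  for a b :: "'n::finite \<Rightarrow> 'a::monoid_add"
  by (simp add: vec_eq_iff diagm_def)

lemma det_diagm: "det (diagm d) = prod d UNIV"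
  for d :: "'n::finite \<Rightarrow> 'a::comm_ring_1"
  by (subst det_diagonal) (auto simp: diagm_def)

lemma trace_diagm: "trace (diagm d) = sum d UNIV"
  for d :: "'n::finite \<Rightarrow> 'a::semiring_1"
  by (simp add: trace_def diagm_def)

lemma trace_transpose_mult_diagm_mult:
  fixes C :: "real^'n^'n"
  assumes "diag_mat C"
  shows "trace (transpose C ** diagm d ** C) = (\<Sum>i\<in>UNIV. d i * (C $ i $ i)^2)"
proof -
  have "(transpose C ** diagm d ** C) $ i $ i = (\<Sum>k\<in>UNIV. C $ k $ i * d k * C $ k $ i)" for i
    by (simp add: matrix_matrix_mult_def transpose_def diagm_def if_distrib[of "\<lambda>y. _ * y"]
        cong: if_cong)
  also have "\<dots> i = (\<Sum>k\<in>UNIV. if k = i then d i * (C $ i $ i)^2 else 0)" for i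
    using assms by (intro sum.cong) (auto simp: diag_mat_def power2_eq_square)
  finally show ?thesis by (simp add: trace_def)
qed

lemma matrix_inv_right: "invertible A \<Longrightarrow> A ** matrix_inv A = mat 1"
  unfolding invertible_def matrix_inv_def by (rule someI2_ex) auto

lemma matrix_inv_left: "invertible A \<Longrightarrow> matrix_inv A ** A = mat 1"
  unfolding invertible_def matrix_inv_def by (rule someI2_ex) auto

lemma matrix_inv_eqI:
  fixes A B :: "'a::field^'n^'n"
  assumes "B ** A = mat 1"
  shows "matrix_inv A = B"
proof -
  have "invertible A" using assms invertible_left_inverse by blast
  then have "B = B ** (A ** matrix_inv A)" by (simp add: matrix_inv_right)
  also have "\<dots> = matrix_inv A" by (simp add: matrix_mul_assoc assms)
  finally show ?thesis by simp
qed

lemma matrix_inv_diagm: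
  fixes d :: "'n::finite \<Rightarrow> 'a::field"
  assumes "\<And>i. d i \<noteq> 0"
  shows "matrix_inv (diagm d) = diagm (\<lambda>i. inverse (d i))"
  by (rule matrix_inv_eqI) (simp add: diagm_mult assms diagm_1)

lemma transpose_matrix_inv_symmetric:
  fixes A :: "'a::field^'n^'n"
  assumes "transpose A = A" "invertible A"
  shows "transpose (matrix_inv A) = matrix_inv A"
  by (metis assms matrix_inv_eqI matrix_inv_right matrix_transpose_mul transpose_mat)

lemma det_matrix_inv:
  fixes A :: "'a::field^'n^'n"
  assumes "invertible A"
  shows "det (matrix_inv A) = inverse (det A)"
  using det_mul[of A "matrix_inv A"] assms
  by (simp add: matrix_inv_right field_simps invertible_det_nz)

section \<open>Positive definite matrices\<close>

lemma pos_def_mat_imp_semidef: "pos_def_mat M \<Longrightarrow> pos_semidef_mat M"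
  unfolding pos_def_mat_def pos_semidef_mat_def
  by (metis inner_zero_left order.strict_implies_order order_refl)

lemma pos_semidef_mat_congruence:
  fixes A :: "real^'m^'n" and B :: "real^'m^'m"
  assumes "pos_semidef_mat B"
  shows "pos_semidef_mat (A ** B ** transpose A)"
  using assms unfolding pos_semidef_mat_def quadratic_form_congruence
  by (simp add: matrix_transpose_mul matrix_mul_assoc)

lemma pos_def_mat_add_semidef:
  assumes "pos_def_mat A" "pos_semidef_mat B"
  shows "pos_def_mat (A + B)"
  using assms unfolding pos_def_mat_def pos_semidef_mat_def
  by (simp add: transpose_add matrix_vector_mult_add_rdistrib inner_add_right add_pos_nonneg)

lemma pos_def_mat_diagm:
  assumes "\<And>i. d i > 0"
  shows "pos_def_mat (diagm d)"
proof -
  have "x \<bullet> (diagm d *v x) > 0" if "x \<noteq> 0" for x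
  proof -
    obtain i where "x $ i \<noteq> 0" using \<open>x \<noteq> 0\<close> vec_eq_iff[of x 0] by auto
    then have "0 < d i * (x $ i)^2" using assms[of i] by simp
    moreover have "x \<bullet> (diagm d *v x) = (\<Sum>j\<in>UNIV. d j * (x $ j)^2)"
      by (simp add: inner_vec_def matrix_vector_mult_def diagm_def if_distrib[of "\<lambda>y. _ * y"]
          power2_eq_square mult_ac cong: if_cong)
    moreover have "0 \<le> d j * (x $ j)^2" for j
      using assms[of j] by simp
    ultimately show ?thesis
      using sum_pos2[of UNIV i "\<lambda>j. d j * (x $ j)^2"] by simp
  qed
  then show ?thesis by (simp add: pos_def_mat_def)
qed

lemma pos_def_mat_invertible:
  assumes "pos_def_mat A"
  shows "invertible A"
proof -
  have "x = 0" if "A *v x = 0" for x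
    using assms that unfolding pos_def_mat_def by (metis inner_zero_right less_irrefl)
  then have "inj ((*v) A)"
    by (simp add: linear_injective_0[OF matrix_vector_mul_linear])
  then show ?thesis by (simp add: invertible_left_inverse matrix_left_invertible_injective)
qed

lemma pos_def_mat_matrix_inv:
  assumes A: "pos_def_mat A"
  shows "pos_def_mat (matrix_inv A)"
proof -
  have inv: "invertible A" by (rule pos_def_mat_invertible[OF A])
  have "x \<bullet> (matrix_inv A *v x) > 0" if "x \<noteq> 0" for x
  proof -
    define y where "y = matrix_inv A *v x"
    have x: "x = A *v y"
      by (simp add: y_def matrix_vector_mul_assoc matrix_inv_right[OF inv])
    then have "y \<noteq> 0" using \<open>x \<noteq> 0\<close> by auto
    then have "0 < y \<bullet> (A *v y)" using A by (simp add: pos_def_mat_def)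
    also have "\<dots> = x \<bullet> y"
      using x by (simp add: inner_commute)
    also have "\<dots> = x \<bullet> (matrix_inv A *v x)"
      by (simp add: y_def)
    finally show ?thesis .
  qed
  moreover have "transpose (matrix_inv A) = matrix_inv A"
    using A inv by (simp add: pos_def_mat_def transpose_matrix_inv_symmetric)
  ultimately show ?thesis by (simp add: pos_def_mat_def)
qed

lemma pos_def_mat_trace_pos:
  assumes "pos_def_mat A"
  shows "trace A > 0"
proof -
  have "A $ i $ i > 0" for i
    using assms unfolding diag_eq_inner_axis pos_def_mat_def by (simp add: axis_eq_0_iff)
  then show ?thesis unfolding trace_def by (simp add: sum_pos)
qed

text \<open>Expand the nonnegative quadratic form of W at the difference of the preimages
  of x under W and S.\<close>
lemma quadratic_form_matrix_inv_antimono: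
  assumes W: "pos_def_mat W" and SW: "pos_semidef_mat (S - W)"
  shows "x \<bullet> (matrix_inv S *v x) \<le> x \<bullet> (matrix_inv W *v x)"
proof -
  have S: "pos_def_mat S" using pos_def_mat_add_semidef[OF W SW] by simp
  define y where "y = matrix_inv S *v x"
  define z where "z = matrix_inv W *v x"
  have Sy: "S *v y = x" and Wz: "W *v z = x"
    by (simp_all add: y_def z_def matrix_vector_mul_assoc matrix_inv_right pos_def_mat_invertible S W)
  have "0 \<le> (z - y) \<bullet> (W *v (z - y))"
    using pos_def_mat_imp_semidef[OF W] by (simp add: pos_semidef_mat_def)
  also have "\<dots> = z \<bullet> (W *v z) - 2 * (y \<bullet> (W *v z)) + y \<bullet> (W *v y)"
    using symmetric_matrix_inner_commute[of W z y] W
    by (simp add: pos_def_mat_def algebra_simps inner_commute)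
  also have "\<dots> = x \<bullet> z - 2 * (x \<bullet> y) + y \<bullet> (W *v y)"
    using Wz by (simp add: inner_commute)
  finally have "0 \<le> x \<bullet> z - 2 * (x \<bullet> y) + y \<bullet> (W *v y)" .
  moreover have "y \<bullet> (W *v y) \<le> x \<bullet> y"
    using SW Sy unfolding pos_semidef_mat_def
    by (auto simp: matrix_vector_mult_diff_rdistrib inner_diff_right inner_commute)
  ultimately show ?thesis unfolding y_def z_def by linarith
qed

lemma trace_matrix_inv_antimono:
  assumes "pos_def_mat W" "pos_semidef_mat (S - W)"
  shows "trace (matrix_inv S) \<le> trace (matrix_inv W)"
  unfolding trace_def
  by (intro sum_mono) (simp only: diag_eq_inner_axis quadratic_form_matrix_inv_antimono[OF assms])

section \<open>The spectral theorem\<close>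

lemma quadratic_nonpos_imp_linear_coeff_zero:
  fixes a d :: real
  assumes "\<And>t. 2 * t * a + t^2 * d \<le> 0"
  shows "a = 0"
proof (rule ccontr)
  assume "a \<noteq> 0"
  define s where "s = \<bar>d\<bar> + 1"
  have "s > 0" "2 * s + d > 0" unfolding s_def by auto
  have "2 * (a / s) * a + (a / s)^2 * d \<le> 0" by (rule assms)
  then have "a * a * (2 * s + d) \<le> 0"
    using \<open>s > 0\<close> by (simp add: field_simps power2_eq_square)
  moreover have "a * a > 0" using \<open>a \<noteq> 0\<close> not_real_square_gt_zero by blast
  then have "a * a * (2 * s + d) > 0" using \<open>2 * s + d > 0\<close> by (rule mult_pos_pos)
  ultimately show False by simp
qed

text \<open>A maximiser u of the quadratic form on the unit sphere of U is an eigenvector: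
  by the first-order condition, M u is orthogonal to every v in U orthogonal to u.\<close>
lemma symmetric_matrix_eigenvector_in_invariant_subspace:
  fixes M :: "real^'n^'n"
  assumes sym: "transpose M = M" and U: "subspace U"
    and inv: "\<And>x. x \<in> U \<Longrightarrow> M *v x \<in> U" and "x0 \<in> U" "x0 \<noteq> 0"
  obtains u where "u \<in> U" "norm u = 1" "M *v u = (u \<bullet> (M *v u)) *\<^sub>R u"
proof -
  let ?K = "sphere 0 1 \<inter> U"
  have "compact ?K" using closed_subspace[OF U] by (intro compact_Int_closed) auto
  moreover have "x0 /\<^sub>R norm x0 \<in> ?K" using assms by (auto simp: subspace_scale)
  then have "?K \<noteq> {}" by blast
  moreover have "continuous_on ?K (\<lambda>x. x \<bullet> (M *v x))"
    by (intro continuous_on_inner continuous_on_id matrix_vector_mult_linear_continuous_on)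
  ultimately have "\<exists>u\<in>?K. \<forall>y\<in>?K. y \<bullet> (M *v y) \<le> u \<bullet> (M *v u)"
    by (rule continuous_attains_sup)
  then obtain u where u: "u \<in> ?K"
    and umax: "\<And>y. y \<in> ?K \<Longrightarrow> y \<bullet> (M *v y) \<le> u \<bullet> (M *v u)"
    by blast
  define lam where "lam = u \<bullet> (M *v u)"
  have uU: "u \<in> U" and nu: "norm u = 1" using u by auto
  have uu: "u \<bullet> u = 1" using nu by (simp add: dot_square_norm)
  have orth: "v \<bullet> (M *v u) = 0" if vU: "v \<in> U" and vu: "v \<bullet> u = 0" for v
  proof (rule quadratic_nonpos_imp_linear_coeff_zero)
    fix t
    define w where "w = u + t *\<^sub>R v"
    have wU: "w \<in> U" unfolding w_def using U uU vU by (auto simp: subspace_add subspace_scale)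
    have ww: "w \<bullet> w = 1 + t^2 * (v \<bullet> v)" unfolding w_def
      using uu vu by (simp add: algebra_simps inner_commute power2_eq_square)
    then have "w \<bullet> w > 0" by (simp add: add_pos_nonneg)
    then have wn: "norm w > 0" by (simp add: dot_square_norm[symmetric] inner_gt_zero_iff)
    have "w /\<^sub>R norm w \<in> ?K" using wU wn U by (auto simp: subspace_scale)
    then have "(w /\<^sub>R norm w) \<bullet> (M *v (w /\<^sub>R norm w)) \<le> lam"
      using umax lam_def by blast
    then have "w \<bullet> (M *v w) \<le> lam * (norm w)^2" using wn
      by (simp add: matrix_vector_mult_scaleR field_simps power2_eq_square)
    moreover have "w \<bullet> (M *v w) = lam + 2 * t * (v \<bullet> (M *v u)) + t^2 * (v \<bullet> (M *v v))"
      using symmetric_matrix_inner_commute[OF sym, of u v] unfolding w_def lam_def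
      by (simp add: algebra_simps matrix_vector_mult_scaleR inner_commute power2_eq_square)
    ultimately show "2 * t * (v \<bullet> (M *v u)) + t^2 * (v \<bullet> (M *v v) - lam * (v \<bullet> v)) \<le> 0"
      using ww by (simp add: power2_norm_eq_inner algebra_simps)
  qed
  define w where "w = M *v u - lam *\<^sub>R u"
  have "w \<in> U" unfolding w_def using U uU inv by (auto simp: subspace_diff subspace_scale)
  moreover have wu: "w \<bullet> u = 0"
    unfolding w_def lam_def using uu by (simp add: algebra_simps inner_commute)
  ultimately have "w \<bullet> (M *v u) = 0" by (rule orth)
  then have "w \<bullet> w = 0" using wu unfolding w_def by (simp add: algebra_simps)
  then have "w = 0" by simp
  then show ?thesis using that uU nu unfolding w_def lam_def by auto
qed

lemma symmetric_matrix_orthonormal_eigenvectors: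
  fixes M :: "real^'n^'n"
  assumes sym: "transpose M = M" and "k \<le> CARD('n)"
  shows "\<exists>B. card B = k \<and> pairwise orthogonal B \<and>
           (\<forall>b\<in>B. norm b = 1 \<and> M *v b = (b \<bullet> (M *v b)) *\<^sub>R b)"
  using \<open>k \<le> CARD('n)\<close>
proof (induction k)
  case 0
  show ?case by (intro exI[of _ "{}"]) auto
next
  case (Suc k)
  then obtain B where B: "card B = k" "pairwise orthogonal B"
    and eig: "\<forall>b\<in>B. norm b = 1 \<and> M *v b = (b \<bullet> (M *v b)) *\<^sub>R b" by auto
  have indep: "independent B" using B(2) eig by (intro pairwise_orthogonal_independent) auto
  then have "finite B" by (rule finiteI_independent)
  have "dim B < DIM(real^'n)"
    using Suc.prems B(1) dim_span_eq_card_independent[OF indep] by (simp add: dim_span)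
  then obtain x where x: "x \<noteq> 0" "\<And>y. y \<in> span B \<Longrightarrow> orthogonal x y"
    using orthogonal_to_subspace_exists by blast
  define U where "U = {y. \<forall>b\<in>B. b \<bullet> y = 0}"
  have U: "subspace U" unfolding subspace_def U_def by (auto simp: inner_add_right)
  have invariant: "M *v y \<in> U" if "y \<in> U" for y
  proof -
    have "b \<bullet> (M *v y) = (b \<bullet> (M *v b)) * (b \<bullet> y)" if "b \<in> B" for b
      using symmetric_matrix_inner_commute[OF sym, of b y] eig that by (metis inner_scaleR_left)
    then show ?thesis using \<open>y \<in> U\<close> unfolding U_def by simp
  qed
  have "x \<in> U" unfolding U_def
    using x(2)[OF span_base] by (auto simp: orthogonal_def inner_commute)
  then obtain u where u: "u \<in> U" "norm u = 1" "M *v u = (u \<bullet> (M *v u)) *\<^sub>R u"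
    using symmetric_matrix_eigenvector_in_invariant_subspace[OF sym U invariant _ x(1)] by blast
  have "u \<bullet> u = 1" using u(2) by (simp add: dot_square_norm)
  then have "u \<notin> B" using u(1) unfolding U_def by auto
  moreover have "pairwise orthogonal (insert u B)"
    using B(2) u(1) unfolding U_def by (auto simp: pairwise_insert orthogonal_def inner_commute)
  ultimately show ?case using B(1) eig u \<open>finite B\<close>
    by (intro exI[of _ "insert u B"]) auto
qed

theorem symmetric_matrix_diagonalization:
  fixes M :: "real^'n^'n"
  assumes sym: "transpose M = M"
  obtains Q :: "real^'n^'n" and l where "orthogonal_matrix Q" "M = Q ** diagm l ** transpose Q"
proof -
  obtain B where B: "card B = CARD('n)" "pairwise orthogonal B"
    and eig: "\<forall>b\<in>B. norm b = 1 \<and> M *v b = (b \<bullet> (M *v b)) *\<^sub>R b"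
    using symmetric_matrix_orthonormal_eigenvectors[OF sym order_refl] by blast
  have "finite B" by (rule card_ge_0_finite) (simp add: B(1))
  then obtain h where h: "bij_betw h (UNIV::'n set) B"
    using finite_same_card_bij[of "UNIV::'n set" B] B(1) by auto
  define Q :: "real^'n^'n" where "Q = (\<chi> i j. h j $ i)"
  define l where "l j = h j \<bullet> (M *v h j)" for j
  have hB: "h j \<in> B" for j using h by (auto simp: bij_betw_def)
  have column: "column j Q = h j" for j by (simp add: Q_def column_def vec_eq_iff)
  have "orthogonal (h i) (h j)" if "i \<noteq> j" for i j
  proof -
    have "h i \<noteq> h j" using h that by (auto simp: bij_betw_def inj_on_def)
    then show ?thesis using B(2) hB by (simp add: pairwise_def)
  qed
  moreover have "norm (h j) = 1" for j using eig hB by blast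
  ultimately have Q: "orthogonal_matrix Q"
    by (simp add: orthogonal_matrix_orthonormal_columns column)
  have "M ** Q = Q ** diagm l"
  proof -
    have "(M ** Q) $ i $ j = (M *v h j) $ i" for i j
      by (simp add: matrix_matrix_mult_def matrix_vector_mult_def Q_def)
    moreover have "M *v h j = l j *\<^sub>R h j" for j
      using eig hB unfolding l_def by blast
    moreover have "l j * h j $ i = (Q ** diagm l) $ i $ j" for i j
      by (simp add: matrix_matrix_mult_def diagm_def Q_def if_distrib[of "\<lambda>x. _ * x"] mult.commute
          cong: if_cong)
    ultimately show ?thesis by (simp add: vec_eq_iff)
  qed
  then have "M ** (Q ** transpose Q) = Q ** diagm l ** transpose Q"
    by (simp add: matrix_mul_assoc)
  then have "M = Q ** diagm l ** transpose Q"
    using Q by (simp add: orthogonal_matrix_def)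
  with Q that show ?thesis by blast
qed

lemma orthogonal_diagonalization_eigenvalue:
  assumes Q: "orthogonal_matrix Q" and M: "M = Q ** diagm l ** transpose Q"
  shows "l j = column j Q \<bullet> (M *v column j Q)"
proof -
  have "transpose Q *v column j Q = axis j 1"
    using Q by (simp add: matrix_vector_mult_basis[symmetric] matrix_vector_mul_assoc
        orthogonal_matrix_def)
  then show ?thesis
    unfolding M quadratic_form_congruence
    by (simp add: diag_eq_inner_axis[symmetric] diagm_def)
qed

lemma pos_semidef_mat_diagonalization:
  assumes "pos_semidef_mat M"
  obtains Q l where "orthogonal_matrix Q" "M = Q ** diagm l ** transpose Q" "\<And>j. l j \<ge> 0"
proof -
  obtain Q l where Q: "orthogonal_matrix Q" and M: "M = Q ** diagm l ** transpose Q"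
    using assms symmetric_matrix_diagonalization unfolding pos_semidef_mat_def by metis
  then have "l j \<ge> 0" for j
    using assms orthogonal_diagonalization_eigenvalue[OF Q M] by (simp add: pos_semidef_mat_def)
  with Q M that show ?thesis by blast
qed

lemma pos_def_mat_diagonalization:
  assumes "pos_def_mat M"
  obtains Q l where "orthogonal_matrix Q" "M = Q ** diagm l ** transpose Q" "\<And>j. l j > 0"
proof -
  obtain Q l where Q: "orthogonal_matrix Q" and M: "M = Q ** diagm l ** transpose Q"
    using assms symmetric_matrix_diagonalization unfolding pos_def_mat_def by metis
  have "column j Q \<noteq> 0" for j
    using Q unfolding orthogonal_matrix_orthonormal_columns by (metis norm_zero zero_neq_one)
  then have "l j > 0" for j
    using assms orthogonal_diagonalization_eigenvalue[OF Q M] by (simp add: pos_def_mat_def)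
  with Q M that show ?thesis by blast
qed

lemma det_orthogonal_congruence:
  fixes Q :: "real^'n^'n"
  assumes "orthogonal_matrix Q"
  shows "det (Q ** D ** transpose Q) = det D"
  using det_orthogonal_matrix[OF assms] by (auto simp: det_mul)

lemma trace_orthogonal_congruence:
  fixes Q :: "real^'n^'n"
  assumes "orthogonal_matrix Q"
  shows "trace (Q ** D ** transpose Q) = trace D"
proof -
  have "trace (Q ** D ** transpose Q) = trace (D ** transpose Q ** Q)"
    by (metis trace_mul_sym matrix_mul_assoc)
  also have "\<dots> = trace D"
    using assms by (simp add: orthogonal_matrix_def flip: matrix_mul_assoc)
  finally show ?thesis .
qed

section \<open>Determinant inequalities\<close>

lemma pos_def_mat_det_pos:
  assumes "pos_def_mat M"
  shows "det M > 0"
proof -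
  obtain Q l where Q: "orthogonal_matrix Q" and M: "M = Q ** diagm l ** transpose Q"
    and l: "\<And>j. l j > 0"
    using pos_def_mat_diagonalization[OF assms] by blast
  have "det M = prod l UNIV" by (simp add: M det_orthogonal_congruence[OF Q] det_diagm)
  with l show ?thesis by (simp add: prod_pos)
qed

lemma det_le_trace_power:
  fixes M :: "real^'n^'n"
  assumes "pos_semidef_mat M"
  shows "det M \<le> (trace M / CARD('n)) ^ CARD('n)"
proof -
  obtain Q l where Q: "orthogonal_matrix Q" and M: "M = Q ** diagm l ** transpose Q"
    and l: "\<And>j. l j \<ge> 0"
    using pos_semidef_mat_diagonalization[OF assms] by blast
  define n where "n = CARD('n)"
  have "n > 0" unfolding n_def by simp
  define p where "p = prod l UNIV"
  have "p \<ge> 0" unfolding p_def using l by (simp add: prod_nonneg)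
  have "p powr (1 / n) \<le> sum l UNIV / n"
    using arith_geom_mean[of UNIV l] l by (simp add: p_def n_def sum_divide_distrib)
  then have "(p powr (1 / n)) ^ n \<le> (sum l UNIV / n) ^ n"
    by (intro power_mono) auto
  also have "(p powr (1 / n)) ^ n = p"
    using \<open>n > 0\<close> \<open>p \<ge> 0\<close> by (cases "p = 0") (simp_all add: powr_power)
  finally show ?thesis
    by (simp add: M n_def p_def det_orthogonal_congruence[OF Q] trace_orthogonal_congruence[OF Q]
        det_diagm trace_diagm)
qed

lemma prod_one_plus_ge:
  fixes e :: "'a \<Rightarrow> real"
  assumes "finite A" "A \<noteq> {}" "\<And>i. i \<in> A \<Longrightarrow> e i \<ge> 0"
  shows "prod (\<lambda>i. 1 + e i) A \<ge> 1 + prod e A"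
  using assms
proof (induction A rule: finite_ne_induct)
  case (singleton x)
  then show ?case by simp
next
  case (insert a F)
  then have "e a \<ge> 0" "prod e F \<ge> 0" "prod (\<lambda>i. 1 + e i) F \<ge> 1 + prod e F"
    by (auto intro: prod_nonneg)
  then have "(1 + e a) * prod (\<lambda>i. 1 + e i) F \<ge> (1 + e a) * (1 + prod e F)"
    by (intro mult_left_mono) auto
  moreover have "(1 + e a) * (1 + prod e F) \<ge> 1 + e a * prod e F"
    using \<open>e a \<ge> 0\<close> \<open>prod e F \<ge> 0\<close> by (simp add: algebra_simps)
  ultimately show ?case using insert by simp
qed

lemma det_mat_1_add_ge:
  assumes "pos_semidef_mat K"
  shows "det (mat 1 + K) \<ge> 1 + det K"
proof -
  obtain R e where R: "orthogonal_matrix R" and K: "K = R ** diagm e ** transpose R"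
    and e: "\<And>j. e j \<ge> 0"
    using pos_semidef_mat_diagonalization[OF assms] by blast
  have "mat 1 + K = R ** (diagm (\<lambda>_. 1) + diagm e) ** transpose R"
    using R by (simp add: K diagm_1 matrix_add_ldistrib matrix_add_rdistrib orthogonal_matrix_def)
  then have "det (mat 1 + K) = prod (\<lambda>j. 1 + e j) UNIV"
    by (simp add: diagm_add det_orthogonal_congruence[OF R] det_diagm)
  moreover have "det K = prod e UNIV"
    by (simp add: K det_orthogonal_congruence[OF R] det_diagm)
  ultimately show ?thesis using e by (simp add: prod_one_plus_ge)
qed

lemma pos_def_mat_factorization:
  assumes "pos_def_mat W"
  obtains L :: "real^'n^'n" where "invertible L" "W = L ** transpose L"
proof -
  obtain Q d where Q: "orthogonal_matrix Q" and W: "W = Q ** diagm d ** transpose Q"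
    and d: "\<And>j. d j > 0"
    using pos_def_mat_diagonalization[OF assms] by blast
  define L where "L = Q ** diagm (\<lambda>j. sqrt (d j))"
  have "L ** transpose L = Q ** (diagm (\<lambda>j. sqrt (d j)) ** diagm (\<lambda>j. sqrt (d j))) ** transpose Q"
    by (simp add: L_def matrix_transpose_mul matrix_mul_assoc)
  also have "\<dots> = W"
    using d by (simp add: W diagm_mult less_imp_le)
  finally have "W = L ** transpose L" ..
  moreover have "det L \<noteq> 0"
    using det_orthogonal_matrix[OF Q] d
    by (auto simp: L_def det_mul det_diagm prod_zero_iff dest: less_imp_neq[symmetric])
  then have "invertible L" by (simp add: invertible_det_nz)
  ultimately show ?thesis using that by blast
qed

text \<open>Congruence by a square root of W reduces to the case W = 1.\<close>
lemma det_add_pos_semidef_ge: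
  fixes W X :: "real^'n^'n"
  assumes W: "pos_def_mat W" and X: "pos_semidef_mat X"
  shows "det (W + X) \<ge> det W + det X"
proof -
  obtain L :: "real^'n^'n" where L: "invertible L" and WL: "W = L ** transpose L"
    using pos_def_mat_factorization[OF W] by blast
  define K where "K = matrix_inv L ** X ** transpose (matrix_inv L)"
  have "L ** K ** transpose L = (L ** matrix_inv L) ** X ** transpose (L ** matrix_inv L)"
    by (simp add: K_def matrix_transpose_mul matrix_mul_assoc)
  then have XK: "X = L ** K ** transpose L"
    by (simp add: matrix_inv_right[OF L])
  have "W + X = L ** (mat 1 + K) ** transpose L"
    by (simp add: WL XK matrix_add_ldistrib matrix_add_rdistrib)
  then have "det (W + X) = det W * det (mat 1 + K)"
    by (simp add: WL det_mul det_transpose mult_ac)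
  also have "\<dots> \<ge> det W * (1 + det K)"
    using det_mat_1_add_ge[OF pos_semidef_mat_congruence[OF X]] pos_def_mat_det_pos[OF W]
    by (simp add: K_def)
  finally show ?thesis
    by (simp add: XK WL det_mul det_transpose algebra_simps)
qed

section \<open>The Riccati equation\<close>

lemma matrix_inv_woodbury:
  fixes S :: "'a::field^'n^'n" and V :: "'a^'m^'m" and C :: "'a^'n^'m"
  assumes S: "invertible S" and V: "invertible V" and G: "invertible (C ** S ** transpose C + V)"
  shows "matrix_inv (matrix_inv S + transpose C ** matrix_inv V ** C)
       = S - S ** transpose C ** matrix_inv (C ** S ** transpose C + V) ** C ** S"
proof (rule matrix_inv_eqI)
  let ?G = "C ** S ** transpose C + V"
  let ?P = "S ** transpose C ** matrix_inv ?G ** C"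
  let ?Q = "S ** transpose C ** matrix_inv V ** C"
  have "?P ** S ** transpose C ** matrix_inv V ** C
      = S ** transpose C ** matrix_inv ?G ** (C ** S ** transpose C) ** matrix_inv V ** C"
    by (simp add: matrix_mul_assoc)
  also have "\<dots> = S ** transpose C ** matrix_inv ?G ** (?G - V) ** matrix_inv V ** C"
    by (simp only: add_diff_cancel)
  also have "\<dots> = S ** transpose C ** (matrix_inv ?G ** ?G) ** matrix_inv V ** C
      - S ** transpose C ** matrix_inv ?G ** (V ** matrix_inv V) ** C"
    by (simp only: matrix_diff_ldistrib matrix_diff_rdistrib matrix_mul_assoc)
  also have "\<dots> = ?Q - ?P"
    by (simp add: matrix_inv_left[OF G] matrix_inv_right[OF V])
  finally have push_through: "?P ** S ** transpose C ** matrix_inv V ** C = ?Q - ?P" .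
  have "(S - ?P ** S) ** (matrix_inv S + transpose C ** matrix_inv V ** C)
      = S ** matrix_inv S + ?Q - (?P ** (S ** matrix_inv S) + ?P ** S ** transpose C ** matrix_inv V ** C)"
    by (simp add: matrix_add_ldistrib matrix_diff_rdistrib matrix_mul_assoc)
  also have "\<dots> = mat 1 + ?Q - (?P + (?Q - ?P))"
    using S by (simp only: matrix_inv_right matrix_mul_rid push_through)
  finally show "(S - ?P ** S) ** (matrix_inv S + transpose C ** matrix_inv V ** C) = mat 1"
    by simp
qed

lemma pos_def_mat_information_matrix:
  fixes S :: "real^'n^'n" and V :: "real^'m^'m" and C :: "real^'n^'m"
  assumes "pos_def_mat S" "pos_def_mat V"
  shows "pos_def_mat (matrix_inv S + transpose C ** matrix_inv V ** C)"
  using pos_def_mat_add_semidef[OF pos_def_mat_matrix_inv[OF assms(1)] pos_semidef_mat_congruence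
      [OF pos_def_mat_imp_semidef[OF pos_def_mat_matrix_inv[OF assms(2)]], of "transpose C"]]
  by simp

lemma riccati_update_eq:
  fixes S :: "real^'n^'n" and A :: "real^'n^'k" and V :: "real^'m^'m" and C :: "real^'n^'m"
  assumes S: "pos_def_mat S" and V: "pos_def_mat V"
  shows "A ** S ** transpose A
       - A ** S ** transpose C ** matrix_inv (C ** S ** transpose C + V) ** C ** S ** transpose A
       = A ** matrix_inv (matrix_inv S + transpose C ** matrix_inv V ** C) ** transpose A"
proof -
  have "pos_def_mat (V + C ** S ** transpose C)"
    by (intro pos_def_mat_add_semidef V pos_semidef_mat_congruence pos_def_mat_imp_semidef S)
  then show ?thesis
    by (simp add: matrix_inv_woodbury pos_def_mat_invertible S V add.commute
        matrix_diff_ldistrib matrix_diff_rdistrib matrix_mul_assoc)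
qed

lemma ln_det_riccati_solution_ge:
  fixes A W S :: "real^'n^'n" and V :: "real^'m^'m" and C :: "real^'n^'m"
  assumes W: "pos_def_mat W" and V: "pos_def_mat V" and S: "pos_def_mat S"
    and DARE: "S = A ** S ** transpose A
       - A ** S ** transpose C ** matrix_inv (C ** S ** transpose C + V) ** C ** S ** transpose A
       + W"
  shows "ln ((det A)^2 / ((trace (matrix_inv W) + trace (transpose C ** matrix_inv V ** C))
      / CARD('n)) ^ CARD('n) + det W) \<le> ln (det S)"
proof -
  define n where "n = CARD('n)"
  define \<tau> where "\<tau> = trace (matrix_inv W) + trace (transpose C ** matrix_inv V ** C)"
  define M where "M = matrix_inv S + transpose C ** matrix_inv V ** C"
  have M_pd: "pos_def_mat M" unfolding M_def using S V by (rule pos_def_mat_information_matrix)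
  have gain: "pos_semidef_mat (A ** matrix_inv M ** transpose A)"
    by (intro pos_semidef_mat_congruence pos_def_mat_imp_semidef pos_def_mat_matrix_inv M_pd)
  have S_split: "S = W + A ** matrix_inv M ** transpose A"
    using DARE riccati_update_eq[OF S V, of A C] unfolding M_def by (simp add: add.commute)
  have det_S_ge: "det W + (det A)^2 / det M \<le> det S"
    using det_add_pos_semidef_ge[OF W gain] det_matrix_inv[OF pos_def_mat_invertible[OF M_pd]]
    by (subst S_split) (simp add: det_mul det_transpose power2_eq_square divide_inverse mult_ac)
  have "trace (matrix_inv S) \<le> trace (matrix_inv W)"
    by (rule trace_matrix_inv_antimono[OF W]) (use gain in \<open>simp add: S_split\<close>)
  then have "trace M \<le> \<tau>" by (simp add: M_def \<tau>_def trace_add)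
  have det_M_pos: "det M > 0" by (rule pos_def_mat_det_pos[OF M_pd])
  have "det M \<le> (trace M / n) ^ n"
    unfolding n_def by (rule det_le_trace_power[OF pos_def_mat_imp_semidef[OF M_pd]])
  also have "\<dots> \<le> (\<tau> / n) ^ n"
    using \<open>trace M \<le> \<tau>\<close> pos_def_mat_trace_pos[OF M_pd]
    by (intro power_mono divide_right_mono) auto
  finally have det_M_le: "det M \<le> (\<tau> / n) ^ n" .
  then have "(det A)^2 / (\<tau> / n) ^ n \<le> (det A)^2 / det M"
    using det_M_pos by (intro divide_left_mono) auto
  then have "(det A)^2 / (\<tau> / n) ^ n + det W \<le> det S"
    using det_S_ge by linarith
  moreover have "0 < (det A)^2 / (\<tau> / n) ^ n + det W"
    using det_M_le det_M_pos pos_def_mat_det_pos[OF W] by (simp add: add_nonneg_pos)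
  ultimately show ?thesis unfolding n_def \<tau>_def by simp
qed

theorem theorem5:
  fixes A W C V S :: "real^'n^'n" and sigma :: "'n \<Rightarrow> real"
  assumes W: "pos_def_mat W"
    and Cdiag: "diag_mat C" and Cpd: "pos_def_mat C"
    and sigma_pos: "\<And>i. sigma i > 0"
    and V: "V = (\<chi> i j. if i = j then (sigma i)^2 else 0)"
    and S: "pos_def_mat S"
    and DARE: "S = A ** S ** transpose A
       - A ** S ** transpose C ** matrix_inv (C ** S ** transpose C + V) ** C ** S ** transpose A
       + W"
  shows "ln (det S) \<ge>
    ln ((det A)^2 / ((1 / real CARD('n)) * (trace (matrix_inv W) + (\<Sum>i\<in>UNIV. (C $ i $ i)^2 / (sigma i)^2))) ^ CARD('n)
        + det W)"
proof -
  have V_diagm: "V = diagm (\<lambda>i. (sigma i)^2)" using V by (simp add: diagm_def)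
  have sigma_nz: "sigma i \<noteq> 0" for i using sigma_pos[of i] by simp
  have V_pd: "pos_def_mat V"
    unfolding V_diagm by (rule pos_def_mat_diagm) (simp add: sigma_nz)
  have "trace (transpose C ** matrix_inv V ** C) = (\<Sum>i\<in>UNIV. (C $ i $ i)^2 / (sigma i)^2)"
    by (simp add: V_diagm matrix_inv_diagm sigma_nz trace_transpose_mult_diagm_mult[OF Cdiag]
        divide_inverse mult.commute)
  then show ?thesis
    using ln_det_riccati_solution_ge[OF W V_pd S DARE] by (simp add: divide_inverse mult.commute)
qed

end
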